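(* Fix a finite vertex set $\mathcal{V}$ and a partition $\mathcal{C}$ of $\mathcal{V}$ in which at least one part has at least two vertices. For an attributed graph $G$ on $\mathcal{V}$, let $n_\triangle^{intra}(G)$ be the number of triangles of $G$ all three of whose vertices lie in the same part of $\mathcal{C}$. Then the global sensitivity of $n_\triangle^{intra}$ is $$\max_{G\sim_{at}G'}\bigl|n_\triangle^{intra}(G)-n_\triangle^{intra}(G')\bigr|=\max_{C\in\mathcal{C}}\{|C|-2\}.$$
   Context: An attributed graph is a triple $G=(\mathcal{V},\mathcal{E},X)$ with $\mathcal{V}$ a finite vertex set, $\mathcal{E}$ a set of undirected edges (simple graph), and $X$ a binary matrix assigning to each vertex an attribute vector. Two attributed graphs $G=(\mathcal{V},\mathcal{E},X)$ and $G'=(\mathcal{V},\mathcal{E}',X')$ on the same vertex set are neighbouring, $G\sim_{at}G'$, iff either $|\mathcal{E}\,\triangle\,\mathcal{E}'|=1$ (and the attributes coincide), or they have the same edges and differ in the attribute vector of exactly one vertex. The partition $\mathcal{C}$ is fixed (the same for all graphs considered). *)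

theory Defs
  imports Main
begin

text \<open>An attributed graph on the vertex set V with d binary attributes per vertex:
  a pair (E, X) where E is a set of undirected edges (2-element subsets of V) and
  X assigns to each vertex of V a binary vector of length d (a row of the attribute
  matrix); outside V, X is fixed to the empty list.\<close>

type_synonym 'v agraph = "'v set set \<times> ('v \<Rightarrow> bool list)"

definition attr_graph :: "'v set \<Rightarrow> nat \<Rightarrow> 'v agraph \<Rightarrow> bool" where
  "attr_graph V d G \<longleftrightarrow>
     (\<forall>e\<in>fst G. e \<subseteq> V \<and> card e = 2) \<and>
     (\<forall>v\<in>V. length (snd G v) = d) \<and> (\<forall>v. v \<notin> V \<longrightarrow> snd G v = [])"

definition is_partition :: "'v set \<Rightarrow> 'v set set \<Rightarrow> bool" where
  "is_partition V \<C> \<longleftrightarrow> (\<forall>C\<in>\<C>. C \<noteq> {}) \<and> \<Union>\<C> = V \<and>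
     (\<forall>C\<in>\<C>. \<forall>D\<in>\<C>. C \<noteq> D \<longrightarrow> C \<inter> D = {})"

definition at_neighbour :: "'v set \<Rightarrow> 'v agraph \<Rightarrow> 'v agraph \<Rightarrow> bool" where
  "at_neighbour V G G' \<longleftrightarrow>
     (card ((fst G - fst G') \<union> (fst G' - fst G)) = 1 \<and> snd G = snd G') \<or>
     (fst G = fst G' \<and> (\<exists>v\<in>V. snd G v \<noteq> snd G' v \<and> (\<forall>u. u \<noteq> v \<longrightarrow> snd G u = snd G' u)))"

definition triangles :: "'v set \<Rightarrow> 'v agraph \<Rightarrow> 'v set set" where
  "triangles V G = {T. T \<subseteq> V \<and> card T = 3 \<and>
     (\<forall>x\<in>T. \<forall>y\<in>T. x \<noteq> y \<longrightarrow> {x, y} \<in> fst G)}"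

definition n_tri_intra :: "'v set \<Rightarrow> 'v set set \<Rightarrow> 'v agraph \<Rightarrow> nat" where
  "n_tri_intra V \<C> G = card {T \<in> triangles V G. \<exists>C\<in>\<C>. T \<subseteq> C}"

end

theory Submission
  imports Defs
begin

(*
  Attribute changes leave the edge set, hence all triangles, unchanged, and an edge change
  between G and G' amounts to deleting a single edge e = {x, y} from one of them. The
  intra-part triangles destroyed by this contain x and y and so lie in the part C containing
  both; such a triangle is determined by its third vertex in C - e, so at most |C| - 2 of them
  are destroyed. Deleting an edge from the complete graph on a largest part destroys exactly
  that many.
*)

lemma card_3_subsets_containing_pair:
  assumes "finite C" "e \<subseteq> C" "card e = 2"
  shows "card {T. e \<subseteq> T \<and> T \<subseteq> C \<and> card T = 3} = card C - 2"
proof -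
  have "{T. e \<subseteq> T \<and> T \<subseteq> C \<and> card T = 3} = (\<lambda>w. insert w e) ` (C - e)"
  proof (intro equalityI subsetI)
    fix T assume T: "T \<in> {T. e \<subseteq> T \<and> T \<subseteq> C \<and> card T = 3}"
    then have "card (T - e) = 1"
      using assms by (simp add: card_Diff_subset finite_subset)
    then obtain w where "T - e = {w}" by (auto simp: card_1_singleton_iff)
    then show "T \<in> (\<lambda>w. insert w e) ` (C - e)" using T by blast
  qed (use assms in \<open>auto simp: card_insert_if finite_subset\<close>)
  moreover have "inj_on (\<lambda>w. insert w e) (C - e)" by (auto simp: inj_on_def)
  ultimately show ?thesis
    using assms by (simp add: card_image card_Diff_subset finite_subset)
qed

definition intra_triangles :: "'v set \<Rightarrow> 'v set set \<Rightarrow> 'v agraph \<Rightarrow> 'v set set" where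
  "intra_triangles V \<C> G = {T \<in> triangles V G. \<exists>C\<in>\<C>. T \<subseteq> C}"

definition complete_edges :: "'v set \<Rightarrow> 'v set set" where
  "complete_edges C = {{x, y} | x y. x \<in> C \<and> y \<in> C \<and> x \<noteq> y}"

lemma n_tri_intra_eq_card: "n_tri_intra V \<C> G = card (intra_triangles V \<C> G)"
  by (simp add: n_tri_intra_def intra_triangles_def)

lemma finite_intra_triangles: "finite V \<Longrightarrow> finite (intra_triangles V \<C> G)"
  by (rule finite_subset[of _ "Pow V"]) (auto simp: intra_triangles_def triangles_def)

lemma intra_triangles_mono:
  "fst G' \<subseteq> fst G \<Longrightarrow> intra_triangles V \<C> G' \<subseteq> intra_triangles V \<C> G"
  by (auto simp: intra_triangles_def triangles_def)

lemma lost_triangle_contains_edge: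
  assumes "fst G - fst G' \<subseteq> {e}" "T \<in> triangles V G" "T \<notin> triangles V G'"
  shows "e \<subseteq> T \<and> card e = 2"
proof -
  from assms(2,3) obtain x y
    where "x \<in> T" "y \<in> T" "x \<noteq> y" "{x, y} \<in> fst G" "{x, y} \<notin> fst G'"
    unfolding triangles_def by blast
  moreover from this have "e = {x, y}" using assms(1) by blast
  ultimately show ?thesis by simp
qed

lemma triangles_remove_edge:
  assumes "fst G' = fst G - {e}" "card e = 2"
  shows "triangles V G' = {T \<in> triangles V G. \<not> e \<subseteq> T}"
proof -
  obtain x y where "e = {x, y}" "x \<noteq> y" using assms(2) by (auto simp: card_2_iff)
  then show ?thesis using assms(1) unfolding triangles_def by (auto simp: doubleton_eq_iff)
qed

lemma n_tri_intra_diff_eq_card_lost: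
  assumes "finite V" "fst G' \<subseteq> fst G"
  shows "int (n_tri_intra V \<C> G) - int (n_tri_intra V \<C> G')
         = int (card (intra_triangles V \<C> G - intra_triangles V \<C> G'))"
  using intra_triangles_mono[OF assms(2)] finite_intra_triangles[OF assms(1)]
  by (simp add: n_tri_intra_eq_card card_Diff_subset card_mono finite_subset)

lemma card_lost_intra_triangles_le:
  assumes "finite V" "is_partition V \<C>" "fst G - fst G' \<subseteq> {e}"
    and "\<And>C. C \<in> \<C> \<Longrightarrow> card C \<le> k + 2"
  shows "card (intra_triangles V \<C> G - intra_triangles V \<C> G') \<le> k"
proof (cases "intra_triangles V \<C> G - intra_triangles V \<C> G' = {}")
  case False
  then obtain T0 C0 where T0: "T0 \<in> triangles V G" "T0 \<notin> triangles V G'"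
    and C0: "C0 \<in> \<C>" "T0 \<subseteq> C0"
    by (auto simp: intra_triangles_def)
  have e: "e \<subseteq> T0" "card e = 2"
    using lost_triangle_contains_edge[OF assms(3) T0] by auto
  have "finite C0" using assms(1,2) C0(1) by (auto simp: is_partition_def intro: finite_subset)
  have "intra_triangles V \<C> G - intra_triangles V \<C> G'
        \<subseteq> {T. e \<subseteq> T \<and> T \<subseteq> C0 \<and> card T = 3}"
  proof
    fix T assume "T \<in> intra_triangles V \<C> G - intra_triangles V \<C> G'"
    then obtain C where T: "T \<in> triangles V G" "T \<notin> triangles V G'" "C \<in> \<C>" "T \<subseteq> C"
      by (auto simp: intra_triangles_def)
    have "e \<subseteq> T" using lost_triangle_contains_edge[OF assms(3) T(1,2)] by simp
    have "e \<noteq> {}" using e(2) by auto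
    then have "C \<inter> C0 \<noteq> {}" using \<open>e \<subseteq> T\<close> T(4) e(1) C0(2) by blast
    then have "C = C0" using assms(2) T(3) C0(1) by (auto simp: is_partition_def)
    with T \<open>e \<subseteq> T\<close> show "T \<in> {T. e \<subseteq> T \<and> T \<subseteq> C0 \<and> card T = 3}"
      by (simp add: triangles_def)
  qed
  then have "card (intra_triangles V \<C> G - intra_triangles V \<C> G')
             \<le> card {T. e \<subseteq> T \<and> T \<subseteq> C0 \<and> card T = 3}"
    by (rule card_mono[rotated])
      (use \<open>finite C0\<close> in \<open>auto intro: finite_subset[of _ "Pow C0"]\<close>)
  also have "\<dots> = card C0 - 2"
    using \<open>finite C0\<close> e C0 by (intro card_3_subsets_containing_pair) auto
  also have "\<dots> \<le> k" using assms(4)[OF C0(1)] by simp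
  finally show ?thesis .
qed (metis card.empty le0)

lemma n_tri_intra_edge_deletion_le:
  assumes "finite V" "is_partition V \<C>" "fst G' \<subseteq> fst G" "fst G - fst G' \<subseteq> {e}"
    and "\<And>C. C \<in> \<C> \<Longrightarrow> card C \<le> k + 2"
  shows "\<bar>int (n_tri_intra V \<C> G) - int (n_tri_intra V \<C> G')\<bar> \<le> int k"
  using n_tri_intra_diff_eq_card_lost[OF assms(1,3)] card_lost_intra_triangles_le[OF assms(1,2,4,5)]
  by simp

lemma at_neighbour_edge_difference:
  assumes "at_neighbour V G G'"
  obtains e where "fst G - fst G' \<subseteq> {e}" "fst G' - fst G \<subseteq> {e}"
  using assms unfolding at_neighbour_def
  by (metis Un_upper1 Un_upper2 card_1_singletonE empty_subsetI Diff_cancel)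

lemma n_tri_intra_sensitivity_le:
  assumes "finite V" "is_partition V \<C>" "at_neighbour V G G'"
    and "\<And>C. C \<in> \<C> \<Longrightarrow> card C \<le> k + 2"
  shows "\<bar>int (n_tri_intra V \<C> G) - int (n_tri_intra V \<C> G')\<bar> \<le> int k"
proof -
  obtain e where e: "fst G - fst G' \<subseteq> {e}" "fst G' - fst G \<subseteq> {e}"
    using at_neighbour_edge_difference[OF assms(3)] .
  then consider "fst G' \<subseteq> fst G" | "fst G \<subseteq> fst G'" by blast
  then show ?thesis
  proof cases
    case 1
    then show ?thesis using n_tri_intra_edge_deletion_le[of V \<C> G' G e k] assms e by simp
  next
    case 2
    then show ?thesis using n_tri_intra_edge_deletion_le[of V \<C> G G' e k] assms e
      by (simp add: abs_minus_commute)
  qed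
qed

lemma triangles_complete_edges:
  assumes "C \<subseteq> V"
  shows "triangles V (complete_edges C, X) = {T. T \<subseteq> C \<and> card T = 3}"
proof (intro equalityI subsetI)
  fix T assume T: "T \<in> triangles V (complete_edges C, X)"
  have "T \<subseteq> C"
  proof
    fix z assume "z \<in> T"
    moreover obtain u where "u \<in> T" "u \<noteq> z"
      using T \<open>z \<in> T\<close> by (force simp: triangles_def card_3_iff)
    ultimately have "{z, u} \<in> complete_edges C" using T by (auto simp: triangles_def)
    then show "z \<in> C" by (auto simp: complete_edges_def doubleton_eq_iff)
  qed
  then show "T \<in> {T. T \<subseteq> C \<and> card T = 3}" using T by (simp add: triangles_def)
qed (use assms in \<open>auto simp: triangles_def complete_edges_def\<close>)

lemma attr_graph_complete_edges:
  assumes "C \<subseteq> V" "E \<subseteq> complete_edges C"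
  shows "attr_graph V d (E, \<lambda>v. if v \<in> V then replicate d False else [])"
  using assms by (auto simp: attr_graph_def complete_edges_def)

lemma n_tri_intra_sensitivity_attained:
  assumes "finite V" "is_partition V \<C>" "C \<in> \<C>" "card C \<ge> 2"
  obtains G G' where "attr_graph V d G" "attr_graph V d G'" "at_neighbour V G G'"
    "\<bar>int (n_tri_intra V \<C> G) - int (n_tri_intra V \<C> G')\<bar> = int (card C) - 2"
proof -
  have "C \<subseteq> V" using assms(2,3) by (auto simp: is_partition_def)
  obtain e where e: "e \<subseteq> C" "card e = 2"
    using obtain_subset_with_card_n[OF assms(4)] by blast
  then have "e \<in> complete_edges C" by (auto simp: complete_edges_def card_2_iff)
  define X where "X = (\<lambda>v. if v \<in> V then replicate d False else [])"
  define G where "G = (complete_edges C, X)"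
  define G' where "G' = (complete_edges C - {e}, X)"
  have "attr_graph V d G" "attr_graph V d G'"
    unfolding G_def G'_def X_def using \<open>C \<subseteq> V\<close> by (auto intro: attr_graph_complete_edges)
  moreover have "at_neighbour V G G'"
  proof -
    have "(fst G - fst G') \<union> (fst G' - fst G) = {e}"
      using \<open>e \<in> complete_edges C\<close> by (auto simp: G_def G'_def)
    then show ?thesis unfolding at_neighbour_def by (simp add: G_def G'_def)
  qed
  moreover have "intra_triangles V \<C> G = {T. T \<subseteq> C \<and> card T = 3}"
    using triangles_complete_edges[OF \<open>C \<subseteq> V\<close>] assms(3)
    by (auto simp: intra_triangles_def G_def)
  moreover have "triangles V G' = {T \<in> triangles V G. \<not> e \<subseteq> T}"
    using e(2) by (intro triangles_remove_edge) (auto simp: G_def G'_def)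
  ultimately have "intra_triangles V \<C> G - intra_triangles V \<C> G'
                   = {T. e \<subseteq> T \<and> T \<subseteq> C \<and> card T = 3}"
    by (auto simp: intra_triangles_def)
  moreover have "fst G' \<subseteq> fst G" by (auto simp: G_def G'_def)
  ultimately have "int (n_tri_intra V \<C> G) - int (n_tri_intra V \<C> G') = int (card C - 2)"
    using n_tri_intra_diff_eq_card_lost[OF assms(1)] card_3_subsets_containing_pair[OF _ e]
      finite_subset[OF \<open>C \<subseteq> V\<close> assms(1)] by simp
  then show ?thesis
    using that \<open>attr_graph V d G\<close> \<open>attr_graph V d G'\<close> \<open>at_neighbour V G G'\<close> assms(4)
    by simp
qed

lemma obtain_largest_part:
  assumes "finite V" "is_partition V \<C>" "\<exists>C\<in>\<C>. card C \<ge> 2"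
  obtains C0 where "C0 \<in> \<C>" "card C0 \<ge> 2" "\<And>C. C \<in> \<C> \<Longrightarrow> card C \<le> card C0"
    "Max {int (card C) - 2 | C. C \<in> \<C>} = int (card C0) - 2"
proof -
  let ?R = "{int (card C) - 2 | C. C \<in> \<C>}"
  have "finite \<C>"
    using assms(1,2) by (auto simp: is_partition_def intro: finite_UnionD)
  then have "finite ?R" by simp
  then have "Max ?R \<in> ?R" using assms(3) by (intro Max_in) auto
  then obtain C0 where C0: "C0 \<in> \<C>" "Max ?R = int (card C0) - 2" by blast
  have largest: "card C \<le> card C0" if "C \<in> \<C>" for C
    using Max_ge[OF \<open>finite ?R\<close>, of "int (card C) - 2"] that C0(2) by auto
  have "card C0 \<ge> 2" using assms(3) largest by force
  show ?thesis by (rule that[OF C0(1) \<open>card C0 \<ge> 2\<close> largest C0(2)])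
qed

theorem proposition3:
  fixes V :: "'v set" and \<C> :: "'v set set" and d :: nat
  assumes "finite V"
    and "is_partition V \<C>"
    and "\<exists>C\<in>\<C>. card C \<ge> 2"
  shows "Max {\<bar>int (n_tri_intra V \<C> G) - int (n_tri_intra V \<C> G')\<bar> | G G'.
              attr_graph V d G \<and> attr_graph V d G' \<and> at_neighbour V G G'}
         = Max {int (card C) - 2 | C. C \<in> \<C>}"
proof -
  let ?S = "{\<bar>int (n_tri_intra V \<C> G) - int (n_tri_intra V \<C> G')\<bar> | G G'.
              attr_graph V d G \<and> attr_graph V d G' \<and> at_neighbour V G G'}"
  obtain C0 where C0: "C0 \<in> \<C>" "card C0 \<ge> 2"
    and largest: "\<And>C. C \<in> \<C> \<Longrightarrow> card C \<le> card C0"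
    and max_part: "Max {int (card C) - 2 | C. C \<in> \<C>} = int (card C0) - 2"
    by (rule obtain_largest_part[OF assms]) blast
  have bound: "card C \<le> (card C0 - 2) + 2" if "C \<in> \<C>" for C
    using largest[OF that] C0(2) by simp
  have upper: "?S \<subseteq> {0..int (card C0) - 2}"
  proof
    fix x assume "x \<in> ?S"
    then obtain G G' where "at_neighbour V G G'"
      and x: "x = \<bar>int (n_tri_intra V \<C> G) - int (n_tri_intra V \<C> G')\<bar>" by blast
    then have "x \<le> int (card C0 - 2)" using n_tri_intra_sensitivity_le[OF assms(1,2) _ bound] by simp
    then show "x \<in> {0..int (card C0) - 2}" using x C0(2) by simp
  qed
  have attained: "int (card C0) - 2 \<in> ?S"
  proof -
    obtain G G' where "attr_graph V d G" "attr_graph V d G'" "at_neighbour V G G'"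
      "\<bar>int (n_tri_intra V \<C> G) - int (n_tri_intra V \<C> G')\<bar> = int (card C0) - 2"
      using n_tri_intra_sensitivity_attained[OF assms(1,2) C0(1,2)] .
    then show ?thesis by (intro CollectI exI[of _ G] exI[of _ G']) simp
  qed
  have "finite ?S" using upper by (rule finite_subset) simp
  then show ?thesis
    unfolding max_part
    by (rule Max_eqI) (use upper attained in \<open>meson atLeastAtMost_iff subsetD\<close>)+
qed

end
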